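(* Let $E(\lambda,\eta,\xi)$ be analytic near $(\lambda_*,0,\xi_* )$ with $\lambda_*\in i\mathbb{R}$, $\xi_*\in\mathbb{R}$, $E(\lambda_*,0,\xi_* )=0$, $E(\lambda,-\eta,\xi)=E(\lambda,\eta,\xi)$, and expand $E=a_{(1,0,0)}(\lambda-\lambda_* )+a_{(0,2,0)}\eta^2+a_{(0,0,1)}(\xi-\xi_* )+O(|\lambda-\lambda_*|+|\eta|^2+|\xi-\xi_*|)^2$ with $a_{(1,0,0)}\ne0$. Let $\lambda(\eta,\xi)$ be the unique zero of $E(\cdot,\eta,\xi)$ near $\lambda_*$ for real $(\eta,\xi)$ near $(0,\xi_* )$, and assume $\Re\partial_\xi\lambda(0,\xi_* )=0>\Re\partial_\xi^2\lambda(0,\xi_* )$. If $\Re\frac{a_{(0,2,0)}}{a_{(1,0,0)}}<0$, then $\Re\lambda(\eta,\xi_* )>0$ for all sufficiently small real $\eta\ne0$. If $\Re\frac{a_{(0,2,0)}}{a_{(1,0,0)}}>0$, then $\Re\lambda(\eta,\xi)$ attains a local maximum, equal to $0$, at $(\eta,\xi)=(0,\xi_* )$.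
   Context: In the paper, $E$ is the periodic Evans–Lopatinsky determinant of a planar roll wave of the inviscid Saint-Venant equations ($\eta$ transverse wavenumber, $\xi$ Floquet number) on the one-dimensional medium-frequency stability boundary, and $\lambda_*$ is a neutral spectral point. *)

theory Defs
  imports "HOL-Analysis.Analysis"
begin

definition holo3 ::
  "(complex \<Rightarrow> complex \<Rightarrow> complex \<Rightarrow> complex) \<Rightarrow> (complex \<times> complex \<times> complex) set \<Rightarrow> bool" where
  "holo3 E U \<longleftrightarrow> open U \<and>
     (\<forall>p\<in>U. \<exists>A B C. ((\<lambda>(x, y, z). E x y z) has_derivative
                        (\<lambda>(u, v, w). A * u + B * v + C * w)) (at p))"

end

theory Submission
  imports Defs "HOL-Complex_Analysis.Complex_Analysis"
begin

(*
  Up to the factor a100, E(x, \<eta>, \<xi>) equals x - lamS + (a020/a100) \<eta>^2 + (a001/a100) (\<xi> - xiS) plus a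
  quadratic error, so Brouwer's fixed point theorem for w \<mapsto> w - E(w, \<eta>, \<xi>) / a100 gives a zero
  within O(\<eta>^2 + |\<xi> - xiS|) of lamS, which by uniqueness is \<lambda>(\<eta>, \<xi>). Inserted into the expansion at
  \<xi> = xiS this yields \<lambda>(\<eta>, xiS) - lamS = -(a020/a100) \<eta>^2 + O(\<eta>^4), the first claim.

  For the second claim compare \<lambda>(\<eta>, \<xi>) with \<lambda>(0, \<xi>). Cauchy estimates show that on a small
  polydisc E is affine in x with slope a100 up to a small Lipschitz error, and, E being even in \<eta>,
  that E(x, \<eta>, \<xi>) - E(x, 0, \<xi>) = a020 \<eta>^2 up to a small multiple of \<eta>^2. Hence
  a100 (\<lambda>(\<eta>, \<xi>) - \<lambda>(0, \<xi>)) \<approx> -a020 \<eta>^2 and Re \<lambda>(\<eta>, \<xi>) \<le> Re \<lambda>(0, \<xi>). Finally \<lambda>(0, \<xi>) is the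
  restriction of a holomorphic implicit function, so the conditions on the first two \<xi>-derivatives
  of its real part make Re \<lambda>(0, \<xi>) \<le> Re lamS = 0 near xiS.
*)

section \<open>Partial derivatives and implicit functions\<close>

lemma has_field_derivative_partials:
  fixes F :: "'a::real_normed_field \<Rightarrow> 'a \<Rightarrow> 'a \<Rightarrow> 'a"
  assumes "((\<lambda>(x, y, z). F x y z) has_derivative (\<lambda>(u, v, w). A * u + B * v + G * w)) (at (x, y, z))"
  shows "((\<lambda>u. F u y z) has_field_derivative A) (at x)"
    and "((\<lambda>v. F x v z) has_field_derivative B) (at y)"
    and "((\<lambda>w. F x y w) has_field_derivative G) (at z)"
proof -
  have "((\<lambda>u. (u, y, z)) has_derivative (\<lambda>u. (u, 0, 0))) (at x)"
       "((\<lambda>v. (x, v, z)) has_derivative (\<lambda>v. (0, v, 0))) (at y)"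
       "((\<lambda>w. (x, y, w)) has_derivative (\<lambda>w. (0, 0, w))) (at z)"
    by (auto intro!: derivative_eq_intros simp: zero_prod_def)
  from this[THEN has_derivative_compose, OF assms]
  show "((\<lambda>u. F u y z) has_field_derivative A) (at x)"
    and "((\<lambda>v. F x v z) has_field_derivative B) (at y)"
    and "((\<lambda>w. F x y w) has_field_derivative G) (at z)"
    by (simp_all add: has_field_derivative_def mult_commute_abs)
qed

lemma has_derivative_y0_slice:
  fixes F :: "'a::real_normed_field \<Rightarrow> 'a \<Rightarrow> 'a \<Rightarrow> 'a"
  assumes "((\<lambda>(x, y, z). F x y z) has_derivative (\<lambda>(u, v, w). A * u + B * v + G * w)) (at (x, 0, z))"
  shows "((\<lambda>(x, z). F x 0 z) has_derivative (\<lambda>(u, w). A * u + G * w)) (at (x, z))"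
proof -
  have "((\<lambda>(x, z). (x, 0, z)) has_derivative (\<lambda>(u, w). (u, 0, w))) (at (x, z))"
    by (auto intro!: derivative_eq_intros simp: split_beta' zero_prod_def)
  moreover have "((\<lambda>(x, y, z). F x y z) has_derivative (\<lambda>(u, v, w). A * u + B * v + G * w))
      (at ((\<lambda>(x, z). (x, 0, z)) (x, z)))"
    using assms by simp
  ultimately show ?thesis
    using has_derivative_compose by (fastforce simp: split_beta')
qed

lemma implicit_quotient_le:
  fixes F :: "'a::real_normed_field \<Rightarrow> 'a \<Rightarrow> 'a"
  assumes "A \<noteq> 0" "F x z = 0" "F x0 z0 = 0" "z \<noteq> z0"
    and lipschitz: "norm (x - x0) \<le> M * norm (z - z0)"
  shows "norm (x - x0 - - G / A * (z - z0)) / norm (z - z0)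
    \<le> (M + 1) / norm A * (norm (F x z - F x0 z0 - (A * (x - x0) + G * (z - z0))) / norm ((x, z) - (x0, z0)))"
proof -
  define rem where "rem = F x z - F x0 z0 - (A * (x - x0) + G * (z - z0))"
  have "norm ((x, z) - (x0, z0)) \<le> norm (x - x0) + norm (z - z0)"
    using norm_Pair_le by simp
  also have "\<dots> \<le> (M + 1) * norm (z - z0)"
    using lipschitz by (simp add: algebra_simps)
  finally have bound: "norm ((x, z) - (x0, z0)) \<le> (M + 1) * norm (z - z0)" .
  moreover have pos: "0 < norm ((x, z) - (x0, z0))"
    using \<open>z \<noteq> z0\<close> by (simp add: zero_prod_def)
  ultimately have "0 < (M + 1) * norm (z - z0)"
    by linarith
  then have "0 < M + 1"
    by (simp add: zero_less_mult_iff)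
  have "x - x0 - - G / A * (z - z0) = - rem / A"
    using assms(1-3) by (simp add: rem_def field_simps)
  then have "norm (x - x0 - - G / A * (z - z0)) / norm (z - z0)
      = (M + 1) / norm A * (norm rem / ((M + 1) * norm (z - z0)))"
    using \<open>0 < M + 1\<close> by (simp add: norm_divide)
  also have "\<dots> \<le> (M + 1) / norm A * (norm rem / norm ((x, z) - (x0, z0)))"
    using bound pos \<open>0 < M + 1\<close> \<open>0 < (M + 1) * norm (z - z0)\<close>
    by (intro mult_left_mono divide_left_mono) auto
  finally show ?thesis
    by (simp add: rem_def)
qed

lemma implicit_has_field_derivative:
  fixes F :: "'a::real_normed_field \<Rightarrow> 'a \<Rightarrow> 'a"
  assumes F': "((\<lambda>(x, z). F x z) has_derivative (\<lambda>(u, w). A * u + G * w)) (at (h z0, z0))"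
    and "A \<noteq> 0" and "open S" "z0 \<in> S"
    and zero: "\<And>z. z \<in> S \<Longrightarrow> F (h z) z = 0"
    and lipschitz: "\<And>z. z \<in> S \<Longrightarrow> norm (h z - h z0) \<le> M * norm (z - z0)"
  shows "(h has_field_derivative - G / A) (at z0)"
proof -
  define p where "p z = (h z, z)" for z
  define Q where "Q q = norm ((\<lambda>(x, z). F x z) q - F (h z0) z0 - (\<lambda>(u, w). A * u + G * w) (q - p z0))
    / norm (q - p z0)" for q
  have in_S: "\<forall>\<^sub>F z in at z0. z \<in> S - {z0}"
    using \<open>open S\<close> \<open>z0 \<in> S\<close> by (rule eventually_at_in_open)
  have "((\<lambda>z. h z - h z0) \<longlongrightarrow> 0) (at z0)"
    by (rule Lim_null_comparison[of _ "\<lambda>z. M * norm (z - z0)"])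
      (use in_S lipschitz in \<open>auto elim: eventually_mono intro!: tendsto_eq_intros\<close>)
  then have "filterlim p (at (p z0)) (at z0)"
    unfolding filterlim_at p_def
    using in_S by (auto simp: LIM_zero_iff elim: eventually_mono intro!: tendsto_eq_intros)
  moreover have "(Q \<longlongrightarrow> 0) (at (p z0))"
    using F' by (simp add: has_derivative_iff_norm Q_def[abs_def] p_def)
  ultimately have "((\<lambda>z. Q (p z)) \<longlongrightarrow> 0) (at z0)"
    by (rule filterlim_compose[rotated])
  then have "((\<lambda>z. (M + 1) / norm A * Q (p z)) \<longlongrightarrow> 0) (at z0)"
    by (rule tendsto_mult_right_zero)
  moreover have "\<forall>\<^sub>F z in at z0.
      norm (norm (h z - h z0 - - G / A * (z - z0)) / norm (z - z0)) \<le> (M + 1) / norm A * Q (p z)"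
    using in_S
  proof eventually_elim
    case (elim z)
    then show ?case
      using implicit_quotient_le[of A F "h z" z "h z0" z0 M G] \<open>A \<noteq> 0\<close> \<open>z0 \<in> S\<close> zero lipschitz
      by (simp add: Q_def p_def)
  qed
  ultimately have "((\<lambda>z. norm (h z - h z0 - - G / A * (z - z0)) / norm (z - z0)) \<longlongrightarrow> 0) (at z0)"
    by (rule Lim_null_comparison[rotated])
  then show ?thesis
    by (simp add: has_field_derivative_def has_derivative_iff_norm bounded_linear_mult_right)
qed

section \<open>Cauchy estimates\<close>

lemma Cauchy_deriv_near_affine:
  fixes g :: "complex \<Rightarrow> complex"
  assumes "g holomorphic_on ball c \<rho>" "continuous_on (cball c \<rho>) g" "0 < \<rho>"
    and near: "\<And>w. norm (c - w) = \<rho> \<Longrightarrow> norm (g w - (\<alpha> + \<beta> * w)) \<le> B"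
  shows "norm (deriv g c - \<beta>) \<le> B / \<rho>"
proof -
  let ?k = "\<lambda>w. g w - (\<alpha> + \<beta> * w)"
  have "norm ((deriv ^^ 1) ?k c) \<le> fact 1 * B / \<rho> ^ 1"
    using assms by (intro Cauchy_inequality holomorphic_intros continuous_intros) auto
  moreover have "(?k has_field_derivative deriv g c - \<beta>) (at c)"
    using holomorphic_derivI[OF assms(1)] \<open>0 < \<rho>\<close>
    by (auto intro!: derivative_eq_intros)
  ultimately show ?thesis
    using DERIV_imp_deriv by fastforce
qed

lemma near_affine_deriv_bound:
  fixes g :: "complex \<Rightarrow> complex"
  assumes holo: "g holomorphic_on ball c r" and "0 < \<rho>" "2 * \<rho> < r"
    and near: "\<And>w. w \<in> cball c (2 * \<rho>) \<Longrightarrow> norm (g w - (\<alpha> + \<beta> * w)) \<le> B"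
    and x: "x \<in> cball c \<rho>"
  shows "norm (deriv g x - \<beta>) \<le> B / \<rho>"
proof (rule Cauchy_deriv_near_affine)
  have "cball x \<rho> \<subseteq> cball c (2 * \<rho>)"
    using x by (intro cball_subset_cball_iff[THEN iffD2]) (auto simp: dist_commute)
  moreover have "cball c (2 * \<rho>) \<subseteq> ball c r"
    using \<open>2 * \<rho> < r\<close> by auto
  ultimately have "cball x \<rho> \<subseteq> ball c r"
    by blast
  then show "g holomorphic_on ball x \<rho>" "continuous_on (cball x \<rho>) g"
    using holo ball_subset_cball
    by (blast intro: holomorphic_on_subset holomorphic_on_imp_continuous_on)+
  show "norm (g w - (\<alpha> + \<beta> * w)) \<le> B" if "norm (x - w) = \<rho>" for w
    using that \<open>cball x \<rho> \<subseteq> cball c (2 * \<rho>)\<close> near by (auto simp: dist_norm)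
qed (use \<open>0 < \<rho>\<close> in auto)

lemma near_affine_lipschitz:
  fixes g :: "complex \<Rightarrow> complex"
  assumes holo: "g holomorphic_on ball c r" and "0 < \<rho>" "2 * \<rho> < r"
    and near: "\<And>w. w \<in> cball c (2 * \<rho>) \<Longrightarrow> norm (g w - (\<alpha> + \<beta> * w)) \<le> B"
    and "x0 \<in> cball c \<rho>" "x1 \<in> cball c \<rho>"
  shows "norm (g x1 - g x0 - \<beta> * (x1 - x0)) \<le> B / \<rho> * norm (x1 - x0)"
proof -
  have "norm ((g x1 - \<beta> * x1) - (g x0 - \<beta> * x0)) \<le> B / \<rho> * norm (x1 - x0)"
  proof (rule field_differentiable_bound[of "cball c \<rho>" _ "\<lambda>x. deriv g x - \<beta>"])
    fix x assume x: "x \<in> cball c \<rho>"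
    then have "x \<in> ball c r"
      using assms(2,3) by auto
    then have "(g has_field_derivative deriv g x) (at x within cball c \<rho>)"
      using holomorphic_derivI[OF holo] has_field_derivative_at_within by blast
    then show "((\<lambda>x. g x - \<beta> * x) has_field_derivative deriv g x - \<beta>) (at x within cball c \<rho>)"
      by (auto intro!: derivative_eq_intros)
    show "norm (deriv g x - \<beta>) \<le> B / \<rho>"
      using near_affine_deriv_bound[OF assms(1-4) x] .
  qed (use assms(5,6) in auto)
  then show ?thesis
    by (simp add: algebra_simps)
qed

lemma deriv_zero_if_even:
  fixes f :: "complex \<Rightarrow> complex"
  assumes holo: "f holomorphic_on ball 0 R" and "0 < R" and even: "\<And>w. norm w < R \<Longrightarrow> f (- w) = f w"
  shows "deriv f 0 = 0"
proof -
  have f': "(f has_field_derivative deriv f 0) (at 0)"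
    using holomorphic_derivI[OF holo] \<open>0 < R\<close> by simp
  then have "(f \<circ> uminus has_field_derivative deriv f 0 * -1) (at 0)"
    by (intro DERIV_chain) (auto intro!: derivative_eq_intros)
  then have mirror: "((\<lambda>w. f (- w)) has_field_derivative - deriv f 0) (at 0)"
    by (simp add: o_def)
  have "\<forall>\<^sub>F w in nhds 0. w \<in> ball 0 R"
    using \<open>0 < R\<close> by (intro eventually_nhds_in_open) auto
  then have "\<forall>\<^sub>F w in nhds 0. f (- w) = f w"
    by eventually_elim (simp add: even)
  with mirror have "(f has_field_derivative - deriv f 0) (at 0)"
    by (simp add: DERIV_cong_ev)
  with f' have "deriv f 0 = - deriv f 0"
    by (rule DERIV_unique)
  then show ?thesis
    by simp
qed

lemma even_holomorphic_quadratic_bound: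
  fixes f :: "complex \<Rightarrow> complex"
  assumes holo: "f holomorphic_on ball 0 R" and even: "\<And>w. norm w < R \<Longrightarrow> f (- w) = f w"
    and "f 0 = 0" and bound: "\<And>w. norm w < R \<Longrightarrow> norm (f w) \<le> M" and y: "norm y < R / 2"
  shows "norm (f y) \<le> 8 * M / R\<^sup>2 * norm y ^ 2"
proof -
  have "0 < R"
    using y norm_ge_zero[of y] by linarith
  have holo': "deriv f holomorphic_on ball 0 R"
    using holo by (simp add: holomorphic_deriv)
  let ?S = "ball (0::complex) (R / 2)"
  have sub: "cball u (R / 2) \<subseteq> ball 0 R" if "u \<in> ?S" for u
  proof
    fix w assume "w \<in> cball u (R / 2)"
    then show "w \<in> ball 0 R"
      using that norm_triangle_ineq4[of u "u - w"] by (simp add: dist_norm)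
  qed
  have "norm ((deriv ^^ 0) f y - (\<Sum>i\<le>1. (deriv ^^ i) f 0 * (y - 0) ^ i / fact i))
      \<le> 8 * M / R\<^sup>2 * norm (y - 0) ^ Suc 1 / fact 1"
  proof (rule complex_Taylor[of ?S 1 "\<lambda>i. (deriv ^^ i) f"])
    fix i :: nat and u assume "u \<in> ?S" "i \<le> 1"
    then have u: "u \<in> ball 0 R"
      using norm_ge_zero[of u] by (simp, linarith)
    from \<open>i \<le> 1\<close> consider "i = 0" | "i = 1"
      by linarith
    then show "((deriv ^^ i) f has_field_derivative (deriv ^^ Suc i) f u) (at u within ?S)"
      by cases (simp_all add: holomorphic_derivI[OF holo open_ball u] holomorphic_derivI[OF holo' open_ball u])
  next
    fix u assume u: "u \<in> ?S"
    have "norm ((deriv ^^ 2) f u) \<le> fact 2 * M / (R / 2) ^ 2"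
    proof (rule Cauchy_inequality)
      show "f holomorphic_on ball u (R / 2)" "continuous_on (cball u (R / 2)) f"
        using sub[OF u] holo ball_subset_cball
        by (blast intro: holomorphic_on_subset holomorphic_on_imp_continuous_on)+
      show "norm (f w) \<le> M" if "norm (u - w) = R / 2" for w
        using that sub[OF u] by (intro bound) (auto simp: dist_norm)
    qed (use \<open>0 < R\<close> in auto)
    then show "norm ((deriv ^^ Suc 1) f u) \<le> 8 * M / R\<^sup>2"
      by (simp add: numeral_2_eq_2 power2_eq_square field_simps)
  qed (use y \<open>0 < R\<close> in auto)
  then show ?thesis
    using \<open>f 0 = 0\<close> deriv_zero_if_even[OF holo \<open>0 < R\<close> even] by (simp add: power2_eq_square)
qed

section \<open>Real restrictions of holomorphic functions\<close>

lemma norm_of_real_diff_eq [simp]: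
  "norm (of_real a - of_real b :: 'a::real_normed_algebra_1) = \<bar>a - b\<bar>"
  by (simp flip: of_real_diff)

lemma has_real_derivative_Re_holomorphic:
  fixes h :: "complex \<Rightarrow> complex"
  assumes "h holomorphic_on ball (of_real x0) \<rho>" "\<bar>t - x0\<bar> < \<rho>"
  shows "((\<lambda>t. Re (h (of_real t))) has_real_derivative Re (deriv h (of_real t))) (at t)"
proof -
  have "(of_real t :: complex) \<in> ball (of_real x0) \<rho>"
    using assms(2) by (simp add: dist_real_def abs_minus_commute)
  then have "(h has_field_derivative deriv h (of_real t)) (at (of_real t))"
    using holomorphic_derivI[OF assms(1)] by blast
  then show ?thesis
    by (intro has_field_derivative_Re has_vector_derivative_real_field)
qed

lemma local_max_if_second_deriv_neg:
  fixes f f' :: "real \<Rightarrow> real"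
  assumes "0 < \<rho>" and f': "\<And>x. \<bar>x - x0\<bar> < \<rho> \<Longrightarrow> (f has_real_derivative f' x) (at x)"
    and f'': "(f' has_real_derivative f'') (at x0)" and "f' x0 = 0" "f'' < 0"
  obtains \<delta> where "0 < \<delta>" "\<And>x. \<bar>x - x0\<bar> < \<delta> \<Longrightarrow> f x \<le> f x0"
proof -
  obtain dR where "0 < dR" and right: "\<And>h. 0 < h \<Longrightarrow> h < dR \<Longrightarrow> f' (x0 + h) < 0"
    using DERIV_neg_dec_right[OF f'' \<open>f'' < 0\<close>] \<open>f' x0 = 0\<close> by auto
  obtain dL where "0 < dL" and left: "\<And>h. 0 < h \<Longrightarrow> h < dL \<Longrightarrow> 0 < f' (x0 - h)"
    using DERIV_neg_dec_left[OF f'' \<open>f'' < 0\<close>] \<open>f' x0 = 0\<close> by auto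
  define \<delta> where "\<delta> = min \<rho> (min dR dL)"
  show ?thesis
  proof (rule that)
    show "0 < \<delta>"
      using \<open>0 < \<rho>\<close> \<open>0 < dR\<close> \<open>0 < dL\<close> by (simp add: \<delta>_def)
    fix x assume x: "\<bar>x - x0\<bar> < \<delta>"
    have deriv: "(f has_real_derivative f' y) (at y)" if "y \<in> {x..x0} \<union> {x0..x}" for y
      using that x by (intro f') (auto simp: \<delta>_def)
    consider "x \<le> x0" | "x0 \<le> x"
      by linarith
    then show "f x \<le> f x0"
    proof cases
      case 1
      have "0 \<le> f' y" if "y \<in> {x..x0}" for y
        using that x left[of "x0 - y"] \<open>f' x0 = 0\<close> by (cases "y = x0") (auto simp: \<delta>_def)
      then show ?thesis
        using deriv_nonneg_imp_mono[of x x0 f f'] deriv 1 by blast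
    next
      case 2
      have "f' y \<le> 0" if "y \<in> {x0..x}" for y
        using that x right[of "y - x0"] \<open>f' x0 = 0\<close> by (cases "y = x0") (auto simp: \<delta>_def)
      then show ?thesis
        using deriv_nonpos_imp_antimono[of x0 x f f'] deriv 2 by blast
    qed
  qed
qed

lemma Re_holomorphic_local_max:
  fixes h :: "complex \<Rightarrow> complex" and f :: "real \<Rightarrow> real"
  assumes holo: "h holomorphic_on ball (of_real x0) \<rho>" and "0 < \<rho>"
    and f: "\<And>t. \<bar>t - x0\<bar> < \<rho> \<Longrightarrow> f t = Re (h (of_real t))"
    and d1: "deriv f x0 = 0" and d2: "deriv (deriv f) x0 < 0"
  obtains \<delta> where "0 < \<delta>" "\<And>t. \<bar>t - x0\<bar> < \<delta> \<Longrightarrow> f t \<le> f x0"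
proof -
  define f' where "f' t = Re (deriv h (of_real t))" for t
  have f': "(f has_real_derivative f' t) (at t)" if "\<bar>t - x0\<bar> < \<rho>" for t
  proof (rule has_field_derivative_transform_within_open[where S = "ball x0 \<rho>"])
    show "((\<lambda>t. Re (h (of_real t))) has_real_derivative f' t) (at t)"
      unfolding f'_def using holo that by (rule has_real_derivative_Re_holomorphic)
  qed (use that f in \<open>auto simp: dist_real_def abs_minus_commute\<close>)
  have "deriv h holomorphic_on ball (of_real x0) \<rho>"
    using holo by (rule holomorphic_deriv) simp
  then have f'': "(f' has_real_derivative Re (deriv (deriv h) (of_real x0))) (at x0)"
    unfolding f'_def using \<open>0 < \<rho>\<close> by (intro has_real_derivative_Re_holomorphic) auto
  have deriv_f: "deriv f t = f' t" if "t \<in> ball x0 \<rho>" for t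
    using f' that by (intro DERIV_imp_deriv) (simp add: dist_real_def abs_minus_commute)
  then have "(deriv f has_real_derivative Re (deriv (deriv h) (of_real x0))) (at x0)"
    using \<open>0 < \<rho>\<close> by (intro has_field_derivative_transform_within_open[OF f'', of "ball x0 \<rho>"]) auto
  then have "deriv (deriv f) x0 = Re (deriv (deriv h) (of_real x0))"
    by (rule DERIV_imp_deriv)
  moreover have "f' x0 = 0"
    using deriv_f[of x0] d1 \<open>0 < \<rho>\<close> by simp
  ultimately show ?thesis
    using local_max_if_second_deriv_neg[OF \<open>0 < \<rho>\<close> f' f''] d2 that by metis
qed

lemma square_le_abs:
  fixes x :: real
  assumes "\<bar>x\<bar> \<le> 1"
  shows "x\<^sup>2 \<le> \<bar>x\<bar>"
  using mult_left_mono[OF assms abs_ge_zero[of x]] by (simp add: power2_eq_square abs_mult_self_eq)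

(* Smallness conditions on an auxiliary radius are collected as eventualities at_right 0,
   from which a single positive witness is then obtained. *)
lemma eventually_mult_less_at_right_0:
  fixes b c :: real
  assumes "0 < b"
  shows "\<forall>\<^sub>F s in at_right 0. c * s < b"
proof -
  have "((\<lambda>s. c * s) \<longlongrightarrow> c * 0) (at_right 0)"
    by (intro tendsto_intros)
  then show ?thesis
    using assms by (simp add: order_tendstoD(2))
qed

lemma eventually_at_right_0_obtain:
  fixes P :: "real \<Rightarrow> bool"
  assumes "\<forall>\<^sub>F s in at_right 0. P s"
  obtains s where "0 < s" "P s"
  using eventually_happens'[OF _ eventually_conj[OF eventually_at_right_less assms]] by auto

lemma Re_pos_if_near_neg_multiple:
  fixes d q :: complex
  assumes "0 < t" and near: "norm (d + of_real t * q) \<le> \<epsilon> * t" and "\<epsilon> < - Re q"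
  shows "0 < Re d"
proof -
  have "- (\<epsilon> * t) \<le> Re (d + of_real t * q)"
    using near abs_Re_le_cmod[of "d + of_real t * q"] by linarith
  then have "- Re q * t - \<epsilon> * t \<le> Re d"
    by (simp add: algebra_simps)
  moreover have "0 < (- Re q - \<epsilon>) * t"
    using assms by simp
  ultimately show ?thesis
    by (simp add: algebra_simps)
qed

lemma Re_nonpos_if_near_neg_multiple:
  fixes d q :: complex
  assumes "0 \<le> t" "0 \<le> \<epsilon>" "\<epsilon> \<le> 1 / 2"
    and near: "norm (d + of_real t * q) \<le> \<epsilon> * (t + norm d)"
    and small: "2 * \<epsilon> * (1 + norm q) \<le> Re q"
  shows "Re d \<le> 0"
proof -
  have "norm d \<le> \<epsilon> * (t + norm d) + t * norm q"
    using near norm_triangle_ineq4[of "d + of_real t * q" "of_real t * q"] \<open>0 \<le> t\<close>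
    by (simp add: norm_mult)
  then have "norm d \<le> 2 * (\<epsilon> + norm q) * t"
    using \<open>\<epsilon> \<le> 1 / 2\<close> mult_right_mono[of \<epsilon> "1 / 2" "norm d"] by (simp add: algebra_simps)
  then have "\<epsilon> * norm d \<le> \<epsilon> * (2 * (\<epsilon> + norm q) * t)"
    using \<open>0 \<le> \<epsilon>\<close> by (rule mult_left_mono)
  moreover have "\<epsilon> * \<epsilon> \<le> \<epsilon> / 2"
    using mult_left_mono[OF \<open>\<epsilon> \<le> 1 / 2\<close> \<open>0 \<le> \<epsilon>\<close>] by simp
  then have "\<epsilon> * \<epsilon> * t \<le> \<epsilon> / 2 * t"
    using \<open>0 \<le> t\<close> by (rule mult_right_mono)
  moreover have "Re d \<le> norm (d + of_real t * q) - Re q * t"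
    using complex_Re_le_cmod[of "d + of_real t * q"] by (simp add: mult.commute)
  moreover have "2 * \<epsilon> * (1 + norm q) * t \<le> Re q * t"
    using small \<open>0 \<le> t\<close> by (rule mult_right_mono)
  ultimately show ?thesis
    using near by (simp add: algebra_simps)
qed

section \<open>Local analysis of E\<close>

(* x, y, z play the roles of \<lambda>, \<eta>, \<xi>, and (L, 0, X) is the point (lamS, 0, xiS); the hypotheses
   of the theorem are only used on a polydisc of radius r around it. *)
locale quadratic_expansion =
  fixes E :: "complex \<Rightarrow> complex \<Rightarrow> complex \<Rightarrow> complex"
    and L X a100 a020 a001 :: complex and C r :: real
  assumes r_pos: "0 < r" and C_nonneg: "0 \<le> C" and a100_nonzero: "a100 \<noteq> 0"
    and differentiable: "\<And>x y z. norm (x - L) < r \<Longrightarrow> norm y < r \<Longrightarrow> norm (z - X) < r \<Longrightarrow>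
      \<exists>A B G. ((\<lambda>(x, y, z). E x y z) has_derivative (\<lambda>(u, v, w). A * u + B * v + G * w)) (at (x, y, z))"
    and even: "\<And>x y z. norm (x - L) < r \<Longrightarrow> norm y < r \<Longrightarrow> norm (z - X) < r \<Longrightarrow>
      E x (- y) z = E x y z"
    and expansion: "\<And>x y z. norm (x - L) < r \<Longrightarrow> norm y < r \<Longrightarrow> norm (z - X) < r \<Longrightarrow>
      norm (E x y z - (a100 * (x - L) + a020 * y\<^sup>2 + a001 * (z - X)))
        \<le> C * (norm (x - L) + norm y ^ 2 + norm (z - X))\<^sup>2"
begin

lemma partial_derivatives:
  assumes "norm (x - L) < r" "norm y < r" "norm (z - X) < r"
  shows "(\<lambda>x. E x y z) field_differentiable at x"
    and "(\<lambda>y. E x y z) field_differentiable at y"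
    and "(\<lambda>z. E x y z) field_differentiable at z"
proof -
  obtain A B G where "((\<lambda>(x, y, z). E x y z) has_derivative (\<lambda>(u, v, w). A * u + B * v + G * w)) (at (x, y, z))"
    using differentiable[OF assms] by blast
  from has_field_derivative_partials[OF this]
  show "(\<lambda>x. E x y z) field_differentiable at x"
    and "(\<lambda>y. E x y z) field_differentiable at y"
    and "(\<lambda>z. E x y z) field_differentiable at z"
    by (auto simp: field_differentiable_def)
qed

lemma holomorphic_in_x:
  assumes "S \<subseteq> ball L r" "norm y < r" "norm (z - X) < r"
  shows "(\<lambda>x. E x y z) holomorphic_on S"
  using assms partial_derivatives(1)
  by (force simp: holomorphic_on_def field_differentiable_at_within dist_norm norm_minus_commute)

lemma holomorphic_in_y:
  assumes "norm (x - L) < r" "S \<subseteq> ball 0 r" "norm (z - X) < r"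
  shows "(\<lambda>y. E x y z) holomorphic_on S"
  using assms partial_derivatives(2)
  by (force simp: holomorphic_on_def field_differentiable_at_within)

lemma holomorphic_in_z:
  assumes "norm (x - L) < r" "norm y < r" "S \<subseteq> ball X r"
  shows "(\<lambda>z. E x y z) holomorphic_on S"
  using assms partial_derivatives(3)
  by (force simp: holomorphic_on_def field_differentiable_at_within dist_norm norm_minus_commute)

lemma expansion_le:
  assumes "norm (x - L) < r" "norm y < r" "norm (z - X) < r"
    and "norm (x - L) + norm y ^ 2 + norm (z - X) \<le> t"
  shows "norm (E x y z - (a100 * (x - L) + a020 * y\<^sup>2 + a001 * (z - X))) \<le> C * t\<^sup>2"
proof -
  have "C * (norm (x - L) + norm y ^ 2 + norm (z - X))\<^sup>2 \<le> C * t\<^sup>2"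
    using assms(4) C_nonneg by (intro mult_left_mono power_mono) auto
  with expansion[OF assms(1-3)] show ?thesis
    by linarith
qed

lemma center_zero: "E L 0 X = 0"
  using expansion[of L 0 X] r_pos by simp

lemma near_affine_in_x:
  assumes "2 * s < r" "norm y ^ 2 \<le> s" "norm y < r" "norm (z - X) \<le> s" "w \<in> cball L (2 * s)"
  shows "norm (E w y z - ((a020 * y\<^sup>2 + a001 * (z - X) - a100 * L) + a100 * w)) \<le> 16 * C * s\<^sup>2"
proof -
  have "0 \<le> s"
    using zero_le_power2 assms(2) by (rule order_trans)
  have "norm (w - L) \<le> 2 * s"
    using assms(5) by (simp add: dist_norm norm_minus_commute)
  then have "norm (E w y z - (a100 * (w - L) + a020 * y\<^sup>2 + a001 * (z - X))) \<le> C * (4 * s)\<^sup>2"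
    using assms \<open>0 \<le> s\<close> by (intro expansion_le) auto
  then show ?thesis
    by (simp add: algebra_simps power2_eq_square)
qed

lemma deriv_in_x_close:
  assumes "0 < s" "2 * s < r" "norm y ^ 2 \<le> s" "norm y < r" "norm (z - X) \<le> s" "norm (x - L) \<le> s"
  shows "norm (deriv (\<lambda>x. E x y z) x - a100) \<le> 16 * C * s"
proof -
  have "norm (deriv (\<lambda>x. E x y z) x - a100) \<le> 16 * C * s\<^sup>2 / s"
    using assms
    by (intro near_affine_deriv_bound[where r = r and \<alpha> = "a020 * y\<^sup>2 + a001 * (z - X) - a100 * L"]
        holomorphic_in_x near_affine_in_x)
      (auto simp: dist_norm norm_minus_commute)
  with \<open>0 < s\<close> show ?thesis
    by (simp add: power2_eq_square)
qed

lemma lipschitz_in_x: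
  assumes "0 < s" "2 * s < r" "norm y ^ 2 \<le> s" "norm y < r" "norm (z - X) \<le> s"
    and "norm (x0 - L) \<le> s" "norm (x1 - L) \<le> s"
  shows "norm (E x1 y z - E x0 y z - a100 * (x1 - x0)) \<le> 16 * C * s * norm (x1 - x0)"
proof -
  have "norm (E x1 y z - E x0 y z - a100 * (x1 - x0)) \<le> 16 * C * s\<^sup>2 / s * norm (x1 - x0)"
    using assms
    by (intro near_affine_lipschitz[where r = r and \<alpha> = "a020 * y\<^sup>2 + a001 * (z - X) - a100 * L"]
        holomorphic_in_x near_affine_in_x)
      (auto simp: dist_norm norm_minus_commute)
  with \<open>0 < s\<close> show ?thesis
    by (simp add: power2_eq_square)
qed

lemma lipschitz_in_z:
  assumes "0 < s" "2 * s < r" "norm (x - L) \<le> s" "norm (z0 - X) \<le> s" "norm (z1 - X) \<le> s"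
  shows "norm (E x 0 z1 - E x 0 z0 - a001 * (z1 - z0)) \<le> 9 * C * s * norm (z1 - z0)"
proof -
  have "norm (E x 0 w - ((a100 * (x - L) - a001 * X) + a001 * w)) \<le> 9 * C * s\<^sup>2"
    if "w \<in> cball X (2 * s)" for w
  proof -
    have "norm (w - X) \<le> 2 * s"
      using that by (simp add: dist_norm norm_minus_commute)
    then have "norm (E x 0 w - (a100 * (x - L) + a020 * 0\<^sup>2 + a001 * (w - X))) \<le> C * (3 * s)\<^sup>2"
      using assms by (intro expansion_le) auto
    then show ?thesis
      by (simp add: algebra_simps power2_eq_square)
  qed
  then have "norm (E x 0 z1 - E x 0 z0 - a001 * (z1 - z0)) \<le> 9 * C * s\<^sup>2 / s * norm (z1 - z0)"
    using assms
    by (intro near_affine_lipschitz[where r = r and \<alpha> = "a100 * (x - L) - a001 * X"] holomorphic_in_z)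
      (auto simp: dist_norm norm_minus_commute)
  with \<open>0 < s\<close> show ?thesis
    by (simp add: power2_eq_square)
qed

lemma zero_exists:
  assumes "norm y < r" "norm (z - X) < r" "\<rho> < r"
    and small: "norm a020 * norm y ^ 2 + norm a001 * norm (z - X) + C * (\<rho> + norm y ^ 2 + norm (z - X))\<^sup>2
      \<le> norm a100 * \<rho>"
  obtains x where "norm (x - L) \<le> \<rho>" "E x y z = 0"
proof -
  let ?T = "\<lambda>w. w - E w y z / a100"
  have "0 \<le> norm a020 * norm y ^ 2 + norm a001 * norm (z - X) + C * (\<rho> + norm y ^ 2 + norm (z - X))\<^sup>2"
    using C_nonneg by simp
  with small have "0 \<le> norm a100 * \<rho>"
    by linarith
  then have "0 \<le> \<rho>"
    using a100_nonzero by (simp add: zero_le_mult_iff)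
  have sub: "cball L \<rho> \<subseteq> ball L r"
    using \<open>\<rho> < r\<close> by auto
  then have in_r: "norm (w - L) < r" if "w \<in> cball L \<rho>" for w
    using that by (auto simp: dist_norm norm_minus_commute)
  have "?T \<in> cball L \<rho> \<rightarrow> cball L \<rho>"
  proof
    fix w assume w: "w \<in> cball L \<rho>"
    define rem where "rem = E w y z - (a100 * (w - L) + a020 * y\<^sup>2 + a001 * (z - X))"
    have "norm (w - L) \<le> \<rho>"
      using w by (auto simp: dist_norm norm_minus_commute)
    then have "norm rem \<le> C * (\<rho> + norm y ^ 2 + norm (z - X))\<^sup>2"
      unfolding rem_def using in_r[OF w] assms(1,2) by (intro expansion_le) auto
    then have "norm (a020 * y\<^sup>2 + a001 * (z - X) + rem) \<le> norm a100 * \<rho>"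
      using small norm_triangle_ineq[of "a020 * y\<^sup>2 + a001 * (z - X)" rem]
        norm_triangle_ineq[of "a020 * y\<^sup>2" "a001 * (z - X)"]
      by (simp add: norm_mult norm_power)
    moreover have "L - ?T w = (a020 * y\<^sup>2 + a001 * (z - X) + rem) / a100"
      using a100_nonzero by (simp add: rem_def field_simps)
    ultimately show "?T w \<in> cball L \<rho>"
      using a100_nonzero by (simp add: dist_norm norm_divide divide_le_eq mult.commute)
  qed
  moreover have "continuous_on (cball L \<rho>) ?T"
    using a100_nonzero assms(1,2)
    by (intro continuous_intros holomorphic_on_imp_continuous_on holomorphic_in_x[OF sub]) auto
  ultimately obtain x where "x \<in> cball L \<rho>" "?T x = x"
    using brouwer[of "cball L \<rho>" ?T] \<open>0 \<le> \<rho>\<close> by auto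
  with a100_nonzero show ?thesis
    by (intro that) (auto simp: dist_norm norm_minus_commute)
qed

lemma zero_exists_within:
  assumes "norm y < r" and K: "norm a020 + norm a001 \<le> norm a100 * (K - 1)"
    and "K * (norm y ^ 2 + norm (z - X)) < r" "C * (K + 1)\<^sup>2 * (norm y ^ 2 + norm (z - X)) \<le> norm a100"
  obtains x where "norm (x - L) \<le> K * (norm y ^ 2 + norm (z - X))" "E x y z = 0"
proof -
  define \<sigma> where "\<sigma> = norm y ^ 2 + norm (z - X)"
  have "0 \<le> \<sigma>"
    by (simp add: \<sigma>_def)
  have "0 \<le> norm a100 * (K - 1)"
    using K norm_ge_zero[of a020] norm_ge_zero[of a001] by linarith
  then have "1 \<le> K"
    using a100_nonzero by (simp add: zero_le_mult_iff)
  then have "\<sigma> \<le> K * \<sigma>"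
    using mult_right_mono[OF \<open>1 \<le> K\<close> \<open>0 \<le> \<sigma>\<close>] by simp
  then have "norm (z - X) < r"
    using assms(3) zero_le_power2[of "norm y"] unfolding \<sigma>_def by linarith
  have "norm a020 * norm y ^ 2 + norm a001 * norm (z - X) \<le> (norm a020 + norm a001) * \<sigma>"
    by (simp add: \<sigma>_def algebra_simps mult_left_mono)
  also have "\<dots> \<le> norm a100 * (K - 1) * \<sigma>"
    using K \<open>0 \<le> \<sigma>\<close> by (rule mult_right_mono)
  finally have linear: "norm a020 * norm y ^ 2 + norm a001 * norm (z - X) \<le> norm a100 * (K - 1) * \<sigma>" .
  have "C * (K * \<sigma> + \<sigma>)\<^sup>2 = (C * (K + 1)\<^sup>2 * \<sigma>) * \<sigma>"
    by (simp add: power2_eq_square algebra_simps)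
  also have "\<dots> \<le> norm a100 * \<sigma>"
    using assms(4) \<open>0 \<le> \<sigma>\<close> by (simp add: \<sigma>_def mult_right_mono)
  finally have "C * (K * \<sigma> + \<sigma>)\<^sup>2 \<le> norm a100 * \<sigma>" .
  moreover have "norm a100 * (K - 1) * \<sigma> + norm a100 * \<sigma> = norm a100 * (K * \<sigma>)"
    by (simp add: algebra_simps)
  moreover have "K * \<sigma> + norm y ^ 2 + norm (z - X) = K * \<sigma> + \<sigma>"
    by (simp add: \<sigma>_def)
  ultimately have "norm a020 * norm y ^ 2 + norm a001 * norm (z - X)
      + C * (K * \<sigma> + norm y ^ 2 + norm (z - X))\<^sup>2 \<le> norm a100 * (K * \<sigma>)"
    using linear by (simp only:)
  moreover have "K * \<sigma> < r"
    using assms(3) by (simp add: \<sigma>_def)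
  ultimately obtain x where "norm (x - L) \<le> K * \<sigma>" "E x y z = 0"
    using zero_exists[OF \<open>norm y < r\<close> \<open>norm (z - X) < r\<close>] by blast
  then show ?thesis
    by (intro that) (simp_all add: \<sigma>_def)
qed

lemma zero_exists_near:
  obtains K m where "0 \<le> K" "0 < m"
    "\<And>y z. norm y < r \<Longrightarrow> norm y ^ 2 + norm (z - X) < m \<Longrightarrow>
      \<exists>x. norm (x - L) \<le> K * (norm y ^ 2 + norm (z - X)) \<and> E x y z = 0"
proof -
  define K where "K = (norm a020 + norm a001) / norm a100 + 1"
  have K: "norm a020 + norm a001 \<le> norm a100 * (K - 1)"
    using a100_nonzero by (simp add: K_def)
  have "\<forall>\<^sub>F m in at_right 0. K * m < r \<and> (C * (K + 1)\<^sup>2) * m < norm a100"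
    using r_pos a100_nonzero by (intro eventually_conj eventually_mult_less_at_right_0) auto
  then obtain m where "0 < m" "K * m < r" "C * (K + 1)\<^sup>2 * m < norm a100"
    by (rule eventually_at_right_0_obtain) auto
  show ?thesis
  proof (rule that[OF _ \<open>0 < m\<close>])
    show "0 \<le> K"
      by (simp add: K_def)
    fix y z :: complex assume y: "norm y < r" and small: "norm y ^ 2 + norm (z - X) < m"
    have "K * (norm y ^ 2 + norm (z - X)) \<le> K * m"
      "C * (K + 1)\<^sup>2 * (norm y ^ 2 + norm (z - X)) \<le> C * (K + 1)\<^sup>2 * m"
      using small C_nonneg by (intro mult_left_mono; simp add: K_def)+
    then have "K * (norm y ^ 2 + norm (z - X)) < r" "C * (K + 1)\<^sup>2 * (norm y ^ 2 + norm (z - X)) \<le> norm a100"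
      using \<open>K * m < r\<close> \<open>C * (K + 1)\<^sup>2 * m < norm a100\<close> by linarith+
    then obtain x where "norm (x - L) \<le> K * (norm y ^ 2 + norm (z - X))" "E x y z = 0"
      by (rule zero_exists_within[OF y K])
    then show "\<exists>x. norm (x - L) \<le> K * (norm y ^ 2 + norm (z - X)) \<and> E x y z = 0"
      by blast
  qed
qed

lemma zeros_lipschitz_in_z:
  assumes "0 < s" "2 * s < r" "32 * C * s \<le> norm a100"
    and x0: "norm (x0 - L) \<le> s" "E x0 0 z0 = 0" and x1: "norm (x1 - L) \<le> s" "E x1 0 z1 = 0"
    and "norm (z0 - X) \<le> s" "norm (z1 - X) \<le> s"
  shows "norm (x1 - x0) \<le> 2 * (norm a001 + 9 * C * s) / norm a100 * norm (z1 - z0)"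
proof -
  have "norm (- E x1 0 z0 - a001 * (z1 - z0)) \<le> 9 * C * s * norm (z1 - z0)"
    using lipschitz_in_z[of s x1 z0 z1] assms by simp
  then have "norm (E x1 0 z0) \<le> 9 * C * s * norm (z1 - z0) + norm a001 * norm (z1 - z0)"
    using norm_triangle_ineq[of "- E x1 0 z0 - a001 * (z1 - z0)" "a001 * (z1 - z0)"]
    by (simp add: norm_mult)
  moreover have "norm (a100 * (x1 - x0)) \<le> norm (E x1 0 z0) + 16 * C * s * norm (x1 - x0)"
    using lipschitz_in_x[of s 0 z0 x0 x1] assms norm_triangle_ineq4[of "E x1 0 z0" "E x1 0 z0 - a100 * (x1 - x0)"]
    by simp
  moreover have "16 * C * s * norm (x1 - x0) \<le> norm a100 / 2 * norm (x1 - x0)"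
    using assms(3) by (intro mult_right_mono) auto
  ultimately have "norm a100 / 2 * norm (x1 - x0) \<le> (norm a001 + 9 * C * s) * norm (z1 - z0)"
    unfolding norm_mult distrib_right by linarith
  with a100_nonzero show ?thesis
    by (simp add: field_simps)
qed

lemma zero_branch_field_differentiable:
  assumes "0 < s" "2 * s < r" "32 * C * s \<le> norm a100" "open S" "z0 \<in> S"
    and h: "\<And>z. z \<in> S \<Longrightarrow> norm (h z - L) \<le> s \<and> norm (z - X) \<le> s \<and> E (h z) 0 z = 0"
  shows "h field_differentiable at z0"
proof -
  obtain A B G where A: "((\<lambda>(x, y, z). E x y z) has_derivative (\<lambda>(u, v, w). A * u + B * v + G * w))
      (at (h z0, 0, z0))"
    using differentiable[of "h z0" 0 z0] h[OF \<open>z0 \<in> S\<close>] assms(1,2) by auto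
  have "(h has_field_derivative - G / A) (at z0)"
  proof (rule implicit_has_field_derivative[of "\<lambda>x z. E x 0 z" A G h z0 S, OF has_derivative_y0_slice[OF A]])
    have "deriv (\<lambda>x. E x 0 z0) (h z0) = A"
      using has_field_derivative_partials(1)[OF A] by (rule DERIV_imp_deriv)
    then have "norm (A - a100) \<le> norm a100 / 2"
      using deriv_in_x_close[of s 0 z0 "h z0"] h[OF \<open>z0 \<in> S\<close>] assms by simp
    then show "A \<noteq> 0"
      using a100_nonzero by auto
    show "norm (h z - h z0) \<le> 2 * (norm a001 + 9 * C * s) / norm a100 * norm (z - z0)" if "z \<in> S" for z
      using zeros_lipschitz_in_z[of s "h z0" z0 "h z" z] h[OF that] h[OF \<open>z0 \<in> S\<close>] assms by blast
  qed (use h assms in auto)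
  then show ?thesis
    by (auto simp: field_differentiable_def)
qed

lemma implicit_zero_branch:
  assumes "0 < s" "2 * s < r" "32 * C * s \<le> norm a100"
  obtains \<rho> h where "0 < \<rho>" "h holomorphic_on ball X \<rho>"
    "\<And>z. z \<in> ball X \<rho> \<Longrightarrow> norm (h z - L) \<le> s \<and> E (h z) 0 z = 0"
proof -
  have "\<forall>\<^sub>F \<rho> in at_right 0. 1 * \<rho> < s \<and> norm a001 * \<rho> < norm a100 * s / 2"
    using assms a100_nonzero by (intro eventually_conj eventually_mult_less_at_right_0) auto
  then obtain \<rho> where "0 < \<rho>" "\<rho> < s" and \<rho>_small: "norm a001 * \<rho> < norm a100 * s / 2"
    by (rule eventually_at_right_0_obtain) auto
  have zero: "\<exists>x. norm (x - L) \<le> s \<and> E x 0 z = 0" if "z \<in> ball X \<rho>" for z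
  proof -
    have z: "norm (z - X) < \<rho>"
      using that by (simp add: dist_norm norm_minus_commute)
    then have "norm a001 * norm (z - X) \<le> norm a001 * \<rho>"
      by (intro mult_left_mono) auto
    with \<rho>_small have "norm a001 * norm (z - X) \<le> norm a100 * s / 2"
      by linarith
    moreover have "C * (s + norm (z - X))\<^sup>2 \<le> C * (2 * s)\<^sup>2"
      using z \<open>\<rho> < s\<close> \<open>0 < s\<close> C_nonneg by (intro mult_left_mono power_mono) auto
    moreover have "C * (2 * s)\<^sup>2 \<le> norm a100 * s / 2"
      using assms(1,3) mult_nonneg_nonneg[OF C_nonneg, of s] by (simp add: power2_eq_square algebra_simps)
    ultimately show ?thesis
      using zero_exists[of 0 z s] z assms \<open>\<rho> < s\<close> by fastforce
  qed
  define h where "h z = (SOME x. norm (x - L) \<le> s \<and> E x 0 z = 0)" for z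
  have h: "norm (h z - L) \<le> s \<and> E (h z) 0 z = 0" if "z \<in> ball X \<rho>" for z
    unfolding h_def using someI_ex[OF zero[OF that]] .
  moreover have "norm (z - X) \<le> s" if "z \<in> ball X \<rho>" for z
    using that \<open>\<rho> < s\<close> by (simp add: dist_norm norm_minus_commute)
  ultimately have "h field_differentiable at z0" if "z0 \<in> ball X \<rho>" for z0
    using that assms by (intro zero_branch_field_differentiable[of s "ball X \<rho>"]) auto
  then have "h holomorphic_on ball X \<rho>"
    by (simp add: holomorphic_on_def field_differentiable_at_within)
  with \<open>0 < \<rho>\<close> h show ?thesis
    by (intro that)
qed

lemma even_remainder:
  assumes "0 < s" "s < r" "sqrt s \<le> r" "norm (x - L) \<le> s" "norm (z - X) \<le> s" "norm y < sqrt s / 2"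
  shows "norm (E x y z - E x 0 z - a020 * y\<^sup>2) \<le> 104 * C * s * norm y ^ 2"
proof -
  let ?f = "\<lambda>w. E x w z - E x 0 z - a020 * w\<^sup>2"
  have xz: "norm (x - L) < r" "norm (z - X) < r"
    using assms by auto
  have "?f holomorphic_on ball 0 (sqrt s)"
    using xz assms(3) by (intro holomorphic_intros holomorphic_in_y) auto
  moreover have "?f (- w) = ?f w" if "norm w < sqrt s" for w
    using even[of x w z] that xz assms(3) by simp
  moreover have "norm (?f w) \<le> 13 * C * s\<^sup>2" if "norm w < sqrt s" for w
  proof -
    have "norm w ^ 2 \<le> s"
      using that \<open>0 < s\<close> by (metis norm_ge_zero power_mono real_sqrt_pow2 less_imp_le)
    then have "norm (E x w z - (a100 * (x - L) + a020 * w\<^sup>2 + a001 * (z - X))) \<le> C * (3 * s)\<^sup>2"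
      using that xz assms by (intro expansion_le) auto
    moreover have "norm (E x 0 z - (a100 * (x - L) + a020 * 0\<^sup>2 + a001 * (z - X))) \<le> C * (2 * s)\<^sup>2"
      using xz assms by (intro expansion_le) auto
    ultimately have "norm (?f w) \<le> C * (3 * s)\<^sup>2 + C * (2 * s)\<^sup>2"
      using norm_triangle_ineq4[of "E x w z - (a100 * (x - L) + a020 * w\<^sup>2 + a001 * (z - X))"
          "E x 0 z - (a100 * (x - L) + a020 * 0\<^sup>2 + a001 * (z - X))"]
      by (simp add: algebra_simps)
    then show ?thesis
      by (simp add: power2_eq_square algebra_simps)
  qed
  ultimately have "norm (?f y) \<le> 8 * (13 * C * s\<^sup>2) / (sqrt s)\<^sup>2 * norm y ^ 2"
    using assms(6) by (intro even_holomorphic_quadratic_bound) auto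
  with \<open>0 < s\<close> show ?thesis
    by (simp add: power2_eq_square)
qed

lemma Re_zero_gt_center:
  fixes \<eta> :: real
  assumes q: "Re (a020 / a100) < 0" and "\<eta> \<noteq> 0" "\<bar>\<eta>\<bar> < r" "0 \<le> K" "K * \<eta>\<^sup>2 < r"
    and small: "C * (K + 1)\<^sup>2 * \<eta>\<^sup>2 < - Re (a020 / a100) * norm a100"
    and x: "norm (x - L) \<le> K * \<eta>\<^sup>2" "E x (of_real \<eta>) X = 0"
  shows "Re L < Re x"
proof -
  have "norm (E x (of_real \<eta>) X - (a100 * (x - L) + a020 * (of_real \<eta>)\<^sup>2)) \<le> C * ((K + 1) * \<eta>\<^sup>2)\<^sup>2"
    using expansion_le[of x "of_real \<eta>" X "(K + 1) * \<eta>\<^sup>2"] assms r_pos by (simp add: algebra_simps)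
  with x(2) have "norm (a100 * (x - L) + a020 * (of_real \<eta>)\<^sup>2) \<le> C * ((K + 1) * \<eta>\<^sup>2)\<^sup>2"
    by (simp add: norm_minus_commute[of "- (a100 * (x - L))"] add.commute)
  moreover have "(x - L) + of_real (\<eta>\<^sup>2) * (a020 / a100) = (a100 * (x - L) + a020 * (of_real \<eta>)\<^sup>2) / a100"
    using a100_nonzero by (simp add: field_simps)
  ultimately have "norm ((x - L) + of_real (\<eta>\<^sup>2) * (a020 / a100)) \<le> C * ((K + 1) * \<eta>\<^sup>2)\<^sup>2 / norm a100"
    by (simp add: norm_divide divide_right_mono)
  also have "\<dots> = (C * (K + 1)\<^sup>2 * \<eta>\<^sup>2 / norm a100) * \<eta>\<^sup>2"
    by (simp add: power_mult_distrib power2_eq_square)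
  finally have "0 < Re (x - L)"
    using \<open>\<eta> \<noteq> 0\<close> small a100_nonzero
    by (intro Re_pos_if_near_neg_multiple[of "\<eta>\<^sup>2" _ _ "C * (K + 1)\<^sup>2 * \<eta>\<^sup>2 / norm a100"])
      (auto simp: divide_less_eq)
  then show ?thesis
    by simp
qed

lemma Re_zero_le_axis_zero:
  fixes \<eta> :: real
  assumes "0 < s" "2 * s < r" "sqrt s < r"
    and small: "208 * C * s \<le> norm a100" "208 * C * s * (1 + norm (a020 / a100)) \<le> Re (a020 / a100) * norm a100"
    and x0: "norm (x0 - L) \<le> s" "E x0 0 z = 0" and x1: "norm (x1 - L) \<le> s" "E x1 (of_real \<eta>) z = 0"
    and "norm (z - X) \<le> s" "\<bar>\<eta>\<bar> < sqrt s / 2"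
  shows "Re x1 \<le> Re x0"
proof -
  define \<epsilon> where "\<epsilon> = 104 * C * s / norm a100"
  have "norm (E x1 (of_real \<eta>) z - E x1 0 z - a020 * (of_real \<eta>)\<^sup>2) \<le> 104 * C * s * \<eta>\<^sup>2"
    using even_remainder[of s x1 z "of_real \<eta>"] assms by simp
  moreover have "norm (E x1 0 z - E x0 0 z - a100 * (x1 - x0)) \<le> 16 * C * s * norm (x1 - x0)"
    using lipschitz_in_x[of s 0 z x0 x1] assms r_pos by simp
  ultimately have "norm (a100 * (x1 - x0) + a020 * (of_real \<eta>)\<^sup>2) \<le> 104 * C * s * \<eta>\<^sup>2 + 16 * C * s * norm (x1 - x0)"
    using x0 x1 norm_triangle_ineq[of "E x1 0 z - E x0 0 z - a100 * (x1 - x0)"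
        "E x1 (of_real \<eta>) z - E x1 0 z - a020 * (of_real \<eta>)\<^sup>2"]
    by (simp add: norm_minus_commute algebra_simps)
  also have "\<dots> \<le> 104 * C * s * (\<eta>\<^sup>2 + norm (x1 - x0))"
    using C_nonneg \<open>0 < s\<close> by (simp add: algebra_simps)
  finally have "norm ((x1 - x0) + of_real (\<eta>\<^sup>2) * (a020 / a100)) \<le> \<epsilon> * (\<eta>\<^sup>2 + norm (x1 - x0))"
    using a100_nonzero by (simp add: \<epsilon>_def norm_divide field_simps)
  moreover have "0 \<le> \<epsilon>" "\<epsilon> \<le> 1 / 2" "2 * \<epsilon> * (1 + norm (a020 / a100)) \<le> Re (a020 / a100)"
    using small \<open>0 < s\<close> C_nonneg a100_nonzero by (auto simp: \<epsilon>_def field_simps)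
  ultimately have "Re (x1 - x0) \<le> 0"
    by (intro Re_nonpos_if_near_neg_multiple[of "\<eta>\<^sup>2" \<epsilon>]) auto
  then show ?thesis
    by simp
qed

end

lemma quadratic_expansion_near:
  fixes E :: "complex \<Rightarrow> complex \<Rightarrow> complex \<Rightarrow> complex"
  assumes holo: "holo3 E U" and center: "(L, 0, X) \<in> U"
    and even: "\<forall>x y z. (x, y, z) \<in> U \<longrightarrow> (x, - y, z) \<in> U \<and> E x (- y) z = E x y z"
    and expansion: "\<exists>C r. r > 0 \<and> (\<forall>x y z.
      norm (x - L) < r \<and> norm y < r \<and> norm (z - X) < r \<longrightarrow>
      norm (E x y z - (a100 * (x - L) + a020 * y ^ 2 + a001 * (z - X)))
        \<le> C * (norm (x - L) + norm y ^ 2 + norm (z - X)) ^ 2)"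
    and "a100 \<noteq> 0"
  obtains C r where "quadratic_expansion E L X a100 a020 a001 C r"
proof -
  obtain r1 where "0 < r1" and ball: "ball (L, 0, X) r1 \<subseteq> U"
    using holo center unfolding holo3_def by (meson open_contains_ball)
  obtain C0 r0 where "0 < r0" and exp0: "\<forall>x y z. norm (x - L) < r0 \<and> norm y < r0 \<and> norm (z - X) < r0 \<longrightarrow>
      norm (E x y z - (a100 * (x - L) + a020 * y ^ 2 + a001 * (z - X)))
        \<le> C0 * (norm (x - L) + norm y ^ 2 + norm (z - X)) ^ 2"
    using expansion by blast
  define r where "r = min (r1 / 3) r0"
  have in_U: "(x, y, z) \<in> U" if "norm (x - L) < r" "norm y < r" "norm (z - X) < r" for x y z
  proof -
    have "norm (L - x, - y, X - z) \<le> norm (L - x) + (norm (- y) + norm (X - z))"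
      by (meson add_left_mono norm_Pair_le order.trans)
    also have "\<dots> < r1"
      using that by (simp add: r_def norm_minus_commute)
    finally show ?thesis
      using ball by (auto simp: dist_norm)
  qed
  show ?thesis
  proof (rule that, unfold_locales)
    show "0 < r" "0 \<le> \<bar>C0\<bar>" "a100 \<noteq> 0"
      using \<open>0 < r1\<close> \<open>0 < r0\<close> \<open>a100 \<noteq> 0\<close> by (auto simp: r_def)
    fix x y z :: complex assume xyz: "norm (x - L) < r" "norm y < r" "norm (z - X) < r"
    show "\<exists>A B G. ((\<lambda>(x, y, z). E x y z) has_derivative (\<lambda>(u, v, w). A * u + B * v + G * w)) (at (x, y, z))"
      using holo in_U[OF xyz] by (auto simp: holo3_def)
    show "E x (- y) z = E x y z"
      using even in_U[OF xyz] by blast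
    have "C0 * (norm (x - L) + norm y ^ 2 + norm (z - X))\<^sup>2 \<le> \<bar>C0\<bar> * (norm (x - L) + norm y ^ 2 + norm (z - X))\<^sup>2"
      by (intro mult_right_mono) auto
    moreover have "norm (x - L) < r0" "norm y < r0" "norm (z - X) < r0"
      using xyz by (simp_all add: r_def)
    ultimately show "norm (E x y z - (a100 * (x - L) + a020 * y\<^sup>2 + a001 * (z - X)))
        \<le> \<bar>C0\<bar> * (norm (x - L) + norm y ^ 2 + norm (z - X))\<^sup>2"
      using exp0 by fastforce
  qed
qed

section \<open>The root branch\<close>

locale zero_branch = quadratic_expansion E L "complex_of_real \<xi>0" a100 a020 a001 C r
  for E L \<xi>0 a100 a020 a001 C r +
  fixes lam :: "real \<Rightarrow> real \<Rightarrow> complex" and \<delta> \<rho> :: real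
  assumes \<delta>_pos: "0 < \<delta>" and \<rho>_pos: "0 < \<rho>"
    and lam_zero: "\<And>\<eta> \<xi>. \<bar>\<eta>\<bar> < \<delta> \<Longrightarrow> \<bar>\<xi> - \<xi>0\<bar> < \<delta> \<Longrightarrow>
      norm (lam \<eta> \<xi> - L) < \<rho> \<and> E (lam \<eta> \<xi>) (of_real \<eta>) (of_real \<xi>) = 0"
    and lam_unique: "\<And>\<eta> \<xi> x. \<bar>\<eta>\<bar> < \<delta> \<Longrightarrow> \<bar>\<xi> - \<xi>0\<bar> < \<delta> \<Longrightarrow> norm (x - L) < \<rho> \<Longrightarrow>
      E x (of_real \<eta>) (of_real \<xi>) = 0 \<Longrightarrow> x = lam \<eta> \<xi>"
begin

lemma lam_center: "lam 0 \<xi>0 = L"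
  using lam_unique[of 0 \<xi>0 L] center_zero \<delta>_pos \<rho>_pos by simp

lemma lam_quadratic_bound:
  obtains K e where "0 \<le> K" "0 < e"
    "\<And>\<eta> \<xi>. \<bar>\<eta>\<bar> < e \<Longrightarrow> \<bar>\<xi> - \<xi>0\<bar> < e \<Longrightarrow> norm (lam \<eta> \<xi> - L) \<le> K * (\<eta>\<^sup>2 + \<bar>\<xi> - \<xi>0\<bar>)"
proof -
  obtain K m where "0 \<le> K" "0 < m" and zero: "\<And>y z. norm y < r \<Longrightarrow> norm y ^ 2 + norm (z - of_real \<xi>0) < m \<Longrightarrow>
      \<exists>x. norm (x - L) \<le> K * (norm y ^ 2 + norm (z - of_real \<xi>0)) \<and> E x y z = 0"
    using zero_exists_near by blast
  have "\<forall>\<^sub>F e in at_right 0. 1 * e < 1 \<and> 1 * e < \<delta> \<and> 1 * e < r \<and> 2 * e < m \<and> (2 * K) * e < \<rho>"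
    using \<delta>_pos r_pos \<open>0 < m\<close> \<rho>_pos by (intro eventually_conj eventually_mult_less_at_right_0) auto
  then obtain e where "0 < e" "e < 1" "e < \<delta>" "e < r" "2 * e < m" "2 * K * e < \<rho>"
    by (rule eventually_at_right_0_obtain) auto
  show ?thesis
  proof (rule that[OF \<open>0 \<le> K\<close> \<open>0 < e\<close>])
    fix \<eta> \<xi> assume \<eta>: "\<bar>\<eta>\<bar> < e" and \<xi>: "\<bar>\<xi> - \<xi>0\<bar> < e"
    have "\<eta>\<^sup>2 \<le> \<bar>\<eta>\<bar>"
      using \<eta> \<open>e < 1\<close> by (intro square_le_abs) auto
    then have \<sigma>: "\<eta>\<^sup>2 + \<bar>\<xi> - \<xi>0\<bar> < 2 * e"
      using \<eta> \<xi> by linarith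
    obtain x where x: "norm (x - L) \<le> K * (\<eta>\<^sup>2 + \<bar>\<xi> - \<xi>0\<bar>)" "E x (of_real \<eta>) (of_real \<xi>) = 0"
      using zero[of "of_real \<eta>" "of_real \<xi>"] \<eta> \<sigma> \<open>e < r\<close> \<open>2 * e < m\<close> by auto
    moreover have "K * (\<eta>\<^sup>2 + \<bar>\<xi> - \<xi>0\<bar>) \<le> K * (2 * e)"
      using \<sigma> \<open>0 \<le> K\<close> by (intro mult_left_mono) auto
    ultimately have "x = lam \<eta> \<xi>"
      using \<eta> \<xi> \<open>e < \<delta>\<close> \<open>2 * K * e < \<rho>\<close> by (intro lam_unique) auto
    with x show "norm (lam \<eta> \<xi> - L) \<le> K * (\<eta>\<^sup>2 + \<bar>\<xi> - \<xi>0\<bar>)"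
      by simp
  qed
qed

lemma Re_lam_gt_center:
  assumes "Re (a020 / a100) < 0"
  obtains e where "0 < e" "\<And>\<eta>. \<eta> \<noteq> 0 \<Longrightarrow> \<bar>\<eta>\<bar> < e \<Longrightarrow> Re L < Re (lam \<eta> \<xi>0)"
proof -
  obtain K e0 where "0 \<le> K" "0 < e0"
    and close: "\<And>\<eta> \<xi>. \<bar>\<eta>\<bar> < e0 \<Longrightarrow> \<bar>\<xi> - \<xi>0\<bar> < e0 \<Longrightarrow> norm (lam \<eta> \<xi> - L) \<le> K * (\<eta>\<^sup>2 + \<bar>\<xi> - \<xi>0\<bar>)"
    using lam_quadratic_bound by blast
  have "\<forall>\<^sub>F e in at_right 0. 1 * e < min (min e0 1) (min \<delta> r) \<and> K * e < r
      \<and> (C * (K + 1)\<^sup>2) * e < - Re (a020 / a100) * norm a100"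
    using \<open>0 < e0\<close> \<delta>_pos r_pos assms a100_nonzero
    by (intro eventually_conj eventually_mult_less_at_right_0) (auto simp: mult_less_0_iff)
  then obtain e where "0 < e" "e < e0" "e < 1" "e < \<delta>" "e < r" "K * e < r"
    and small: "C * (K + 1)\<^sup>2 * e < - Re (a020 / a100) * norm a100"
    by (rule eventually_at_right_0_obtain) auto
  show ?thesis
  proof (rule that[OF \<open>0 < e\<close>])
    fix \<eta> :: real assume "\<eta> \<noteq> 0" and \<eta>: "\<bar>\<eta>\<bar> < e"
    have "\<eta>\<^sup>2 \<le> e"
      using square_le_abs[of \<eta>] \<eta> \<open>e < 1\<close> by simp
    then have "K * \<eta>\<^sup>2 \<le> K * e" "C * (K + 1)\<^sup>2 * \<eta>\<^sup>2 \<le> C * (K + 1)\<^sup>2 * e"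
      using \<open>0 \<le> K\<close> C_nonneg by (simp_all add: mult_left_mono)
    then show "Re L < Re (lam \<eta> \<xi>0)"
      using Re_zero_gt_center[OF assms \<open>\<eta> \<noteq> 0\<close>, of K "lam \<eta> \<xi>0"] close[of \<eta> \<xi>0] lam_zero[of \<eta> \<xi>0]
        \<eta> \<open>0 \<le> K\<close> \<open>0 < e0\<close> \<open>e < e0\<close> \<open>e < \<delta>\<close> \<open>e < r\<close> \<open>K * e < r\<close> small
      by simp
  qed
qed

lemma Re_lam_le_axis:
  assumes "0 < Re (a020 / a100)"
  obtains e where "0 < e" "\<And>\<eta> \<xi>. \<bar>\<eta>\<bar> < e \<Longrightarrow> \<bar>\<xi> - \<xi>0\<bar> < e \<Longrightarrow> Re (lam \<eta> \<xi>) \<le> Re (lam 0 \<xi>)"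
proof -
  obtain K e0 where "0 \<le> K" "0 < e0"
    and close: "\<And>\<eta> \<xi>. \<bar>\<eta>\<bar> < e0 \<Longrightarrow> \<bar>\<xi> - \<xi>0\<bar> < e0 \<Longrightarrow> norm (lam \<eta> \<xi> - L) \<le> K * (\<eta>\<^sup>2 + \<bar>\<xi> - \<xi>0\<bar>)"
    using lam_quadratic_bound by blast
  have "\<forall>\<^sub>F s in at_right 0. 2 * s < r \<and> 1 * s < r\<^sup>2 \<and> (208 * C) * s < norm a100
      \<and> (208 * C * (1 + norm (a020 / a100))) * s < Re (a020 / a100) * norm a100"
    using r_pos assms a100_nonzero by (intro eventually_conj eventually_mult_less_at_right_0) auto
  then obtain s where s: "0 < s" "2 * s < r" "s < r\<^sup>2" "208 * C * s < norm a100"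
      "208 * C * (1 + norm (a020 / a100)) * s < Re (a020 / a100) * norm a100"
    by (rule eventually_at_right_0_obtain) auto
  have "\<forall>\<^sub>F e in at_right 0. 1 * e < min (min e0 1) (min \<delta> s) \<and> (2 * K) * e < s \<and> 2 * e < sqrt s"
    using \<open>0 < e0\<close> \<delta>_pos \<open>0 < s\<close> by (intro eventually_conj eventually_mult_less_at_right_0) auto
  then obtain e where "0 < e" "e < e0" "e < 1" "e < \<delta>" "e < s" "2 * K * e < s" "2 * e < sqrt s"
    by (rule eventually_at_right_0_obtain) auto
  show ?thesis
  proof (rule that[OF \<open>0 < e\<close>])
    fix \<eta> \<xi> assume \<eta>: "\<bar>\<eta>\<bar> < e" and \<xi>: "\<bar>\<xi> - \<xi>0\<bar> < e"
    have "\<eta>\<^sup>2 \<le> \<bar>\<eta>\<bar>"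
      using \<eta> \<open>e < 1\<close> by (intro square_le_abs) auto
    then have "K * (\<eta>\<^sup>2 + \<bar>\<xi> - \<xi>0\<bar>) \<le> K * (2 * e)" "K * (0\<^sup>2 + \<bar>\<xi> - \<xi>0\<bar>) \<le> K * (2 * e)"
      using \<eta> \<xi> \<open>0 \<le> K\<close> by (intro mult_left_mono; simp)+
    then have "norm (lam \<eta> \<xi> - L) \<le> s" "norm (lam 0 \<xi> - L) \<le> s"
      using close[of \<eta> \<xi>] close[of 0 \<xi>] \<eta> \<xi> \<open>e < e0\<close> \<open>0 < e0\<close> \<open>2 * K * e < s\<close> by auto
    moreover have "sqrt s < r"
      using real_sqrt_less_mono[OF \<open>s < r\<^sup>2\<close>] r_pos by simp
    ultimately show "Re (lam \<eta> \<xi>) \<le> Re (lam 0 \<xi>)"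
      using Re_zero_le_axis_zero[of s "lam 0 \<xi>" "of_real \<xi>" "lam \<eta> \<xi>" \<eta>] s lam_zero[of \<eta> \<xi>] lam_zero[of 0 \<xi>]
        \<eta> \<xi> \<delta>_pos \<open>e < \<delta>\<close> \<open>e < s\<close> \<open>2 * e < sqrt s\<close> by (simp add: mult_ac)
  qed
qed

lemma Re_lam_axis_le_center:
  assumes "deriv (\<lambda>\<xi>. Re (lam 0 \<xi>)) \<xi>0 = 0" "deriv (deriv (\<lambda>\<xi>. Re (lam 0 \<xi>))) \<xi>0 < 0"
  obtains e where "0 < e" "\<And>\<xi>. \<bar>\<xi> - \<xi>0\<bar> < e \<Longrightarrow> Re (lam 0 \<xi>) \<le> Re L"
proof -
  have "\<forall>\<^sub>F s in at_right 0. 2 * s < r \<and> (32 * C) * s < norm a100 \<and> 1 * s < \<rho>"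
    using r_pos a100_nonzero \<rho>_pos by (intro eventually_conj eventually_mult_less_at_right_0) auto
  then obtain s where "0 < s" "2 * s < r" "32 * C * s < norm a100" "s < \<rho>"
    by (rule eventually_at_right_0_obtain) auto
  then obtain \<rho>' h where "0 < \<rho>'" and holo: "h holomorphic_on ball (of_real \<xi>0) \<rho>'"
    and h: "\<And>z. z \<in> ball (of_real \<xi>0) \<rho>' \<Longrightarrow> norm (h z - L) \<le> s \<and> E (h z) 0 z = 0"
    using implicit_zero_branch[of s] by auto
  define e0 where "e0 = min \<rho>' \<delta>"
  have "0 < e0"
    using \<open>0 < \<rho>'\<close> \<delta>_pos by (simp add: e0_def)
  moreover have "h holomorphic_on ball (of_real \<xi>0) e0"
    using holo by (rule holomorphic_on_subset) (simp add: e0_def subset_ball)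
  moreover have "Re (lam 0 \<xi>) = Re (h (of_real \<xi>))" if "\<bar>\<xi> - \<xi>0\<bar> < e0" for \<xi>
  proof -
    have "of_real \<xi> \<in> ball (of_real \<xi>0 :: complex) \<rho>'"
      using that by (simp add: e0_def dist_real_def abs_minus_commute)
    then have "h (of_real \<xi>) = lam 0 \<xi>"
      using that h \<open>s < \<rho>\<close> by (intro lam_unique) (fastforce simp: e0_def)+
    then show ?thesis
      by simp
  qed
  ultimately obtain e where "0 < e" "\<And>\<xi>. \<bar>\<xi> - \<xi>0\<bar> < e \<Longrightarrow> Re (lam 0 \<xi>) \<le> Re (lam 0 \<xi>0)"
    using Re_holomorphic_local_max[of h \<xi>0 e0 "\<lambda>\<xi>. Re (lam 0 \<xi>)"] assms by blast
  then show ?thesis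
    using that lam_center by simp
qed


lemma Re_lam_local_max:
  assumes "0 < Re (a020 / a100)"
    and "deriv (\<lambda>\<xi>. Re (lam 0 \<xi>)) \<xi>0 = 0" "deriv (deriv (\<lambda>\<xi>. Re (lam 0 \<xi>))) \<xi>0 < 0"
  obtains e where "0 < e" "\<And>\<eta> \<xi>. \<bar>\<eta>\<bar> < e \<Longrightarrow> \<bar>\<xi> - \<xi>0\<bar> < e \<Longrightarrow> Re (lam \<eta> \<xi>) \<le> Re L"
proof -
  obtain e1 where "0 < e1" "\<And>\<eta> \<xi>. \<bar>\<eta>\<bar> < e1 \<Longrightarrow> \<bar>\<xi> - \<xi>0\<bar> < e1 \<Longrightarrow> Re (lam \<eta> \<xi>) \<le> Re (lam 0 \<xi>)"
    using Re_lam_le_axis[OF assms(1)] by blast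
  moreover obtain e2 where "0 < e2" "\<And>\<xi>. \<bar>\<xi> - \<xi>0\<bar> < e2 \<Longrightarrow> Re (lam 0 \<xi>) \<le> Re L"
    using Re_lam_axis_le_center[OF assms(2,3)] by blast
  ultimately show ?thesis
    by (intro that[of "min e1 e2"]) force+
qed

end

theorem mainTheorem15:
  fixes E :: "complex \<Rightarrow> complex \<Rightarrow> complex \<Rightarrow> complex"
    and lamS :: complex and xiS :: real
    and a100 a020 a001 :: complex
    and lam :: "real \<Rightarrow> real \<Rightarrow> complex"
    and U :: "(complex \<times> complex \<times> complex) set"
  assumes holo: "holo3 E U"
    and inU: "(lamS, 0, complex_of_real xiS) \<in> U"
    and imag: "Re lamS = 0"
    and zero: "E lamS 0 (complex_of_real xiS) = 0"
    and even: "\<forall>x y z. (x, y, z) \<in> U \<longrightarrow> (x, - y, z) \<in> U \<and> E x (- y) z = E x y z"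
    and expansion: "\<exists>C r. r > 0 \<and> (\<forall>x y z.
            norm (x - lamS) < r \<and> norm y < r \<and> norm (z - complex_of_real xiS) < r \<longrightarrow>
            norm (E x y z - (a100 * (x - lamS) + a020 * y ^ 2 + a001 * (z - complex_of_real xiS)))
              \<le> C * (norm (x - lamS) + norm y ^ 2 + norm (z - complex_of_real xiS)) ^ 2)"
    and a100_nz: "a100 \<noteq> 0"
    and lam_root: "\<exists>\<delta> r. \<delta> > 0 \<and> r > 0 \<and> (\<forall>\<eta> \<xi>. \<bar>\<eta>\<bar> < \<delta> \<and> \<bar>\<xi> - xiS\<bar> < \<delta> \<longrightarrow>
            norm (lam \<eta> \<xi> - lamS) < r \<and>
            E (lam \<eta> \<xi>) (complex_of_real \<eta>) (complex_of_real \<xi>) = 0 \<and>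
            (\<forall>z. norm (z - lamS) < r \<and> E z (complex_of_real \<eta>) (complex_of_real \<xi>) = 0
                   \<longrightarrow> z = lam \<eta> \<xi>))"
    and d1: "deriv (\<lambda>\<xi>. Re (lam 0 \<xi>)) xiS = 0"
    and d2: "deriv (deriv (\<lambda>\<xi>. Re (lam 0 \<xi>))) xiS < 0"
  shows "(Re (a020 / a100) < 0 \<longrightarrow>
            (\<exists>\<delta>>0. \<forall>\<eta>::real. \<eta> \<noteq> 0 \<and> \<bar>\<eta>\<bar> < \<delta> \<longrightarrow> Re (lam \<eta> xiS) > 0))
       \<and> (Re (a020 / a100) > 0 \<longrightarrow>
            Re (lam 0 xiS) = 0 \<and>
            (\<exists>\<delta>>0. \<forall>\<eta> \<xi>. \<bar>\<eta>\<bar> < \<delta> \<and> \<bar>\<xi> - xiS\<bar> < \<delta> \<longrightarrow>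
                Re (lam \<eta> \<xi>) \<le> Re (lam 0 xiS)))"
proof -
  obtain C r where "quadratic_expansion E lamS (of_real xiS) a100 a020 a001 C r"
    using quadratic_expansion_near[OF holo inU even expansion a100_nz] by blast
  moreover obtain \<delta> \<rho> where "0 < \<delta>" "0 < \<rho>" and root: "\<forall>\<eta> \<xi>. \<bar>\<eta>\<bar> < \<delta> \<and> \<bar>\<xi> - xiS\<bar> < \<delta> \<longrightarrow>
      norm (lam \<eta> \<xi> - lamS) < \<rho> \<and> E (lam \<eta> \<xi>) (of_real \<eta>) (of_real \<xi>) = 0 \<and>
      (\<forall>z. norm (z - lamS) < \<rho> \<and> E z (of_real \<eta>) (of_real \<xi>) = 0 \<longrightarrow> z = lam \<eta> \<xi>)"
    using lam_root by blast
  ultimately interpret zero_branch E lamS xiS a100 a020 a001 C r lam \<delta> \<rho>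
    by (intro zero_branch.intro zero_branch_axioms.intro) (use root in auto)
  have "Re (lam 0 xiS) = 0"
    using lam_center imag by simp
  moreover have "\<exists>\<delta>>0. \<forall>\<eta>. \<eta> \<noteq> 0 \<and> \<bar>\<eta>\<bar> < \<delta> \<longrightarrow> Re (lam \<eta> xiS) > 0" if "Re (a020 / a100) < 0"
    using Re_lam_gt_center[OF that] imag by metis
  moreover have "\<exists>\<delta>>0. \<forall>\<eta> \<xi>. \<bar>\<eta>\<bar> < \<delta> \<and> \<bar>\<xi> - xiS\<bar> < \<delta> \<longrightarrow> Re (lam \<eta> \<xi>) \<le> Re (lam 0 xiS)"
    if "Re (a020 / a100) > 0"
    using Re_lam_local_max[OF that d1 d2] lam_center by metis
  ultimately show ?thesis
    by blast
qed

end
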